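(* Let $\ell_1,\dots,\ell_T$ be labels, $v_1,v_2>0$, $1\le i\le j\le T$, and suppose the optimal solution of subproblem $(i,j)$ is constant (hence equal to $r_{i,j}$). Let $0\le\alpha<r_{i,j}$ and consider the augmented subproblem: minimize $J_{i,j}(p_i,\dots,p_j)$ subject to $0\le p_i\le p_{i+1}\le\cdots\le p_j\le\alpha$. Then for every RBPSR $C_\rho$, the constant solution $p_i=\cdots=p_j=\alpha$ minimizes the augmented subproblem.
   Context: A regular binary proper scoring rule (RBPSR) is a function $C_\rho:\{\theta_1,\theta_2\}\times[0,1]\to[0,\infty]$ given by $C_\rho(\theta_1,q)=\int_q^1\frac{\rho(\eta)}{\eta}\,d\eta$ and $C_\rho(\theta_2,q)=\int_0^q\frac{\rho(\eta)}{1-\eta}\,d\eta$, where $\rho$ is a probability distribution on $[0,1]$ (possibly containing Dirac point masses), and these integrals are finite except that $C_\rho(\theta_1,0)$ and $C_\rho(\theta_2,1)$ may equal $\infty$. Given labels $\ell_1,\dots,\ell_T\in\{\theta_1,\theta_2\}$ and weights $v_1,v_2>0$, write $w(\theta_1)=v_1$, $w(\theta_2)=v_2$. For $1\le i\le j\le T$, a solution of subproblem $(i,j)$ is any $p_{i,j}=(p_i,\dots,p_j)\in[0,1]^{j-i+1}$, feasible if $p_i\le\cdots\le p_j$, with objective $J_{i,j}(p_{i,j})=\sum_{t=i}^j w(\ell_t)C_\rho(\ell_t,p_t)$. The optimal solution of subproblem $(i,j)$ is a feasible solution minimizing $J_{i,j}$ among feasible solutions simultaneously for every RBPSR $C_\rho$;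 it is constant if $p_i=\cdots=p_j$. For $i\le j$, $r_{i,j}=\frac{v_1m_{i,j}}{v_1m_{i,j}+v_2n_{i,j}}$, where $m_{i,j},n_{i,j}$ are the numbers of $\theta_1$- and $\theta_2$-labels among $\ell_i,\dots,\ell_j$. *)

theory Defs
  imports "HOL-Probability.Probability"
begin

datatype label = Theta1 | Theta2

text \<open>Convention for point masses: the theta1-integral ranges over [q,1], the theta2-integral
  over [0,q).  The integrand 1/eta (resp. 1/(1-eta)) is taken as infinity at eta = 0
  (resp. eta = 1).\<close>
definition C :: "real measure \<Rightarrow> label \<Rightarrow> real \<Rightarrow> ennreal" where
  "C rho l q = (case l of
      Theta1 \<Rightarrow> (\<integral>\<^sup>+ eta. (if eta = 0 then \<infinity> else ennreal (1 / eta)) * indicator {q..1} eta \<partial>rho)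
    | Theta2 \<Rightarrow> (\<integral>\<^sup>+ eta. (if eta = 1 then \<infinity> else ennreal (1 / (1 - eta))) * indicator {0..<q} eta \<partial>rho))"

definition rbpsr :: "real measure \<Rightarrow> bool" where
  "rbpsr rho \<longleftrightarrow> prob_space rho \<and> sets rho = sets borel \<and> emeasure rho {0..1} = 1
     \<and> (\<forall>q. 0 < q \<and> q \<le> 1 \<longrightarrow> C rho Theta1 q < \<infinity>)
     \<and> (\<forall>q. 0 \<le> q \<and> q < 1 \<longrightarrow> C rho Theta2 q < \<infinity>)"

definition w :: "real \<Rightarrow> real \<Rightarrow> label \<Rightarrow> real" where
  "w v1 v2 l = (case l of Theta1 \<Rightarrow> v1 | Theta2 \<Rightarrow> v2)"

definition J :: "(nat \<Rightarrow> label) \<Rightarrow> real \<Rightarrow> real \<Rightarrow> real measure \<Rightarrow> nat \<Rightarrow> nat \<Rightarrow> (nat \<Rightarrow> real) \<Rightarrow> ennreal" where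
  "J lab v1 v2 rho i j p = (\<Sum>t\<in>{i..j}. ennreal (w v1 v2 (lab t)) * C rho (lab t) (p t))"

definition feasible :: "nat \<Rightarrow> nat \<Rightarrow> (nat \<Rightarrow> real) \<Rightarrow> bool" where
  "feasible i j p \<longleftrightarrow> (\<forall>t\<in>{i..j}. 0 \<le> p t \<and> p t \<le> 1) \<and>
     (\<forall>s\<in>{i..j}. \<forall>t\<in>{i..j}. s \<le> t \<longrightarrow> p s \<le> p t)"

definition optimal :: "(nat \<Rightarrow> label) \<Rightarrow> real \<Rightarrow> real \<Rightarrow> nat \<Rightarrow> nat \<Rightarrow> (nat \<Rightarrow> real) \<Rightarrow> bool" where
  "optimal lab v1 v2 i j p \<longleftrightarrow> feasible i j p \<and>
     (\<forall>rho. rbpsr rho \<longrightarrow> (\<forall>p'. feasible i j p' \<longrightarrow> J lab v1 v2 rho i j p \<le> J lab v1 v2 rho i j p'))"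

definition r :: "(nat \<Rightarrow> label) \<Rightarrow> real \<Rightarrow> real \<Rightarrow> nat \<Rightarrow> nat \<Rightarrow> real" where
  "r lab v1 v2 i j = (let m = card {t\<in>{i..j}. lab t = Theta1}; n = card {t\<in>{i..j}. lab t = Theta2}
     in v1 * real m / (v1 * real m + v2 * real n))"

end

theory Submission
  imports Defs
begin

(*
  Every scoring rule C_rho is the rho-integral of an elementary kernel
  score_kernel l q eta, so the objective J is the rho-integral of the density
  loss_density p eta.  It therefore suffices to show, for every feasible p bounded by
  alpha and every eta, that the constant solution alpha has pointwise smaller density.
  - For eta < 0 or eta >= alpha this holds for any p below alpha, because the kernels
    are monotone in q away from [0, q).
  - For 0 <= eta < alpha we use the Dirac measure at eta, which is itself an RBPSR
    whose score is the density at eta.  Optimality of the constant solution c thus gives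
    density(c) <= density(p) at eta, and an explicit count of the labels shows
    density(alpha) <= density(c) whenever eta < r_{i,j}.
  The file first develops the kernel representation, then the Dirac argument, then
  the explicit densities of constant solutions, and finally the theorem.
*)

definition score_kernel :: "label \<Rightarrow> real \<Rightarrow> real \<Rightarrow> ennreal" where
  "score_kernel l q eta = (case l of
      Theta1 \<Rightarrow> (if eta = 0 then \<infinity> else ennreal (1 / eta)) * indicator {q..1} eta
    | Theta2 \<Rightarrow> (if eta = 1 then \<infinity> else ennreal (1 / (1 - eta))) * indicator {0..<q} eta)"

definition loss_density ::
    "(nat \<Rightarrow> label) \<Rightarrow> real \<Rightarrow> real \<Rightarrow> nat \<Rightarrow> nat \<Rightarrow> (nat \<Rightarrow> real) \<Rightarrow> real \<Rightarrow> ennreal" where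
  "loss_density lab v1 v2 i j p eta =
     (\<Sum>t\<in>{i..j}. ennreal (w v1 v2 (lab t)) * score_kernel (lab t) (p t) eta)"

lemma score_kernel_measurable [measurable]: "score_kernel l q \<in> borel_measurable borel"
  unfolding score_kernel_def by (cases l) (simp_all, measurable)

lemma C_as_integral: "C rho l q = (\<integral>\<^sup>+ eta. score_kernel l q eta \<partial>rho)"
  unfolding C_def score_kernel_def by (cases l) simp_all

lemma J_as_integral:
  assumes "sets rho = sets borel"
  shows "J lab v1 v2 rho i j p = (\<integral>\<^sup>+ eta. loss_density lab v1 v2 i j p eta \<partial>rho)"
proof -
  have kernel_meas: "score_kernel l q \<in> borel_measurable rho" for l q
    by (simp add: measurable_cong_sets[OF assms refl])
  have "(\<lambda>eta. c * score_kernel l q eta) \<in> borel_measurable borel" for c l q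
    by measurable
  then have meas: "(\<lambda>eta. c * score_kernel l q eta) \<in> borel_measurable rho" for c l q
    by (simp add: measurable_cong_sets[OF assms refl])
  have "J lab v1 v2 rho i j p =
      (\<Sum>t\<in>{i..j}. \<integral>\<^sup>+ eta. ennreal (w v1 v2 (lab t)) * score_kernel (lab t) (p t) eta \<partial>rho)"
    unfolding J_def C_as_integral by (simp add: nn_integral_cmult kernel_meas)
  also have "\<dots> = (\<integral>\<^sup>+ eta. loss_density lab v1 v2 i j p eta \<partial>rho)"
    unfolding loss_density_def by (rule nn_integral_sum[symmetric]) (simp add: meas)
  finally show ?thesis .
qed

lemma rbpsr_return:
  assumes "0 \<le> eta" "eta \<le> 1"
  shows "rbpsr (return borel eta)"
  unfolding rbpsr_def using assms
  by (auto simp: prob_space_return C_as_integral nn_integral_return score_kernel_def indicator_def)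

lemma J_return: "J lab v1 v2 (return borel eta) i j p = loss_density lab v1 v2 i j p eta"
  unfolding J_as_integral[OF sets_return] loss_density_def
  by (rule nn_integral_return) auto

lemma optimal_density_le:
  assumes "optimal lab v1 v2 i j p0" "feasible i j p" "0 \<le> eta" "eta \<le> 1"
  shows "loss_density lab v1 v2 i j p0 eta \<le> loss_density lab v1 v2 i j p eta"
  using assms rbpsr_return[OF assms(3,4)] unfolding optimal_def J_return[symmetric] by blast

text \<open>Lowering the forecast can only increase a kernel, unless eta lies in the region
  [0, q) where the theta2-kernel is active.\<close>
lemma score_kernel_antimono:
  assumes "q' \<le> q" "eta < 0 \<or> q \<le> eta"
  shows "score_kernel l q eta \<le> score_kernel l q' eta"
  using assms by (cases l) (auto simp: score_kernel_def indicator_def)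

lemma loss_density_const_le_outside:
  assumes "\<forall>t\<in>{i..j}. p t \<le> q" "eta < 0 \<or> q \<le> eta"
  shows "loss_density lab v1 v2 i j (\<lambda>_. q) eta \<le> loss_density lab v1 v2 i j p eta"
  unfolding loss_density_def
  using assms by (intro sum_mono mult_left_mono score_kernel_antimono) auto

definition label_count :: "(nat \<Rightarrow> label) \<Rightarrow> nat \<Rightarrow> nat \<Rightarrow> label \<Rightarrow> nat" where
  "label_count lab i j L = card {t\<in>{i..j}. lab t = L}"

lemma r_label_count:
  "r lab v1 v2 i j = v1 * label_count lab i j Theta1 /
     (v1 * label_count lab i j Theta1 + v2 * label_count lab i j Theta2)"
  unfolding r_def label_count_def Let_def by simp

lemma r_le_1:
  assumes "0 \<le> v1" "0 \<le> v2"
  shows "r lab v1 v2 i j \<le> 1"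
proof -
  have "0 \<le> v1 * label_count lab i j Theta1" "0 \<le> v2 * label_count lab i j Theta2"
    using assms by simp_all
  then show ?thesis
    unfolding r_label_count by (auto simp: divide_le_eq_1)
qed

lemma sum_label_indicator:
  fixes x :: real
  assumes "0 \<le> x"
  shows "(\<Sum>t\<in>{i..j}. ennreal (if lab t = L then x else 0)) = ennreal (label_count lab i j L * x)"
  using assms
  by (subst sum_ennreal) (auto simp: sum.inter_filter[symmetric] label_count_def)

text \<open>Below the forecast only the theta2-kernels are active.\<close>
lemma loss_density_const_below:
  assumes "0 \<le> v2" "0 \<le> eta" "eta < 1" "eta < q"
  shows "loss_density lab v1 v2 i j (\<lambda>_. q) eta = ennreal (label_count lab i j Theta2 * (v2 / (1 - eta)))"
proof -
  have "ennreal (w v1 v2 l) * score_kernel l q eta = ennreal (if l = Theta2 then v2 / (1 - eta) else 0)" for l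
    using assms by (cases l) (auto simp: score_kernel_def indicator_def w_def ennreal_mult'[symmetric])
  then have "loss_density lab v1 v2 i j (\<lambda>_. q) eta =
      (\<Sum>t\<in>{i..j}. ennreal (if lab t = Theta2 then v2 / (1 - eta) else 0))"
    unfolding loss_density_def by simp
  also have "\<dots> = ennreal (label_count lab i j Theta2 * (v2 / (1 - eta)))"
    by (rule sum_label_indicator) (use assms in auto)
  finally show ?thesis .
qed

text \<open>At or above the forecast only the theta1-kernels are active.\<close>
lemma loss_density_const_above:
  assumes "0 \<le> v1" "0 < eta" "eta \<le> 1" "q \<le> eta"
  shows "loss_density lab v1 v2 i j (\<lambda>_. q) eta = ennreal (label_count lab i j Theta1 * (v1 / eta))"
proof -
  have "ennreal (w v1 v2 l) * score_kernel l q eta = ennreal (if l = Theta1 then v1 / eta else 0)" for l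
    using assms by (cases l) (auto simp: score_kernel_def indicator_def w_def ennreal_mult'[symmetric])
  then have "loss_density lab v1 v2 i j (\<lambda>_. q) eta =
      (\<Sum>t\<in>{i..j}. ennreal (if lab t = Theta1 then v1 / eta else 0))"
    unfolding loss_density_def by simp
  also have "\<dots> = ennreal (label_count lab i j Theta1 * (v1 / eta))"
    by (rule sum_label_indicator) (use assms in auto)
  finally show ?thesis .
qed

lemma loss_density_zero_at_zero:
  assumes "0 < v1" "0 < label_count lab i j Theta1" "q \<le> 0"
  shows "loss_density lab v1 v2 i j (\<lambda>_. q) 0 = \<infinity>"
proof -
  obtain t0 where t0: "t0 \<in> {i..j}" "lab t0 = Theta1"
    using assms(2) unfolding label_count_def by (metis (mono_tags, lifting) card.empty empty_Collect_eq less_irrefl)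
  have "ennreal (w v1 v2 (lab t0)) * score_kernel (lab t0) q 0 \<le> loss_density lab v1 v2 i j (\<lambda>_. q) 0"
    unfolding loss_density_def using t0 by (intro member_le_sum) auto
  moreover have "ennreal (w v1 v2 (lab t0)) * score_kernel (lab t0) q 0 = \<infinity>"
    using t0 assms by (simp add: score_kernel_def w_def indicator_def ennreal_mult_eq_top_iff)
  ultimately show ?thesis by (simp add: top_unique)
qed

text \<open>The balance inequality behind r: below r the theta2-mass per unit of 1-eta
  is dominated by the theta1-mass per unit of eta.\<close>
lemma balance_below_r:
  fixes m n :: real
  assumes "0 < v1" "0 \<le> v2" "0 < m" "0 \<le> n" "0 < eta" "eta < 1"
    and "eta < v1 * m / (v1 * m + v2 * n)"
  shows "n * (v2 / (1 - eta)) \<le> m * (v1 / eta)"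
proof -
  have "0 < v1 * m + v2 * n" using assms by (simp add: add_pos_nonneg)
  then have "eta * (v1 * m + v2 * n) < v1 * m" using assms(7) by (simp add: pos_less_divide_eq)
  then have "eta * (v2 * n) \<le> (1 - eta) * (v1 * m)" by (simp add: algebra_simps)
  then show ?thesis using assms(5,6) by (simp add: field_simps)
qed

lemma loss_density_const_le_const:
  assumes "0 < v1" "0 < v2" "0 \<le> c" "0 \<le> eta" "eta < r lab v1 v2 i j" "eta < q"
  shows "loss_density lab v1 v2 i j (\<lambda>_. q) eta \<le> loss_density lab v1 v2 i j (\<lambda>_. c) eta"
proof -
  define m where "m = label_count lab i j Theta1"
  define n where "n = label_count lab i j Theta2"
  have r_eq: "r lab v1 v2 i j = v1 * m / (v1 * m + v2 * n)"
    unfolding m_def n_def by (rule r_label_count)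
  have m_pos: "0 < m"
    using assms(4,5) r_eq by (cases "m = 0") auto
  have eta_lt_1: "eta < 1"
    using assms(5) r_le_1[of v1 v2 lab i j] assms(1,2) by simp
  have density_q: "loss_density lab v1 v2 i j (\<lambda>_. q) eta = ennreal (n * (v2 / (1 - eta)))"
    unfolding n_def using assms eta_lt_1 by (intro loss_density_const_below) auto
  consider "eta < c" | "c \<le> eta" "eta = 0" | "c \<le> eta" "0 < eta"
    using assms(4) by linarith
  then show ?thesis
  proof cases
    case 1
    then show ?thesis
      unfolding density_q n_def using assms eta_lt_1 by (simp add: loss_density_const_below)
  next
    case 2
    then show ?thesis
      using loss_density_zero_at_zero[of v1 lab i j c v2] assms(1) m_pos unfolding m_def by simp
  next
    case 3
    then have "loss_density lab v1 v2 i j (\<lambda>_. c) eta = ennreal (m * (v1 / eta))"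
      unfolding m_def using assms(1) eta_lt_1 by (intro loss_density_const_above) auto
    moreover have "n * (v2 / (1 - eta)) \<le> m * (v1 / eta)"
      using balance_below_r[of v1 v2 m n eta] assms(1,2,5) 3 eta_lt_1 m_pos r_eq by simp
    ultimately show ?thesis unfolding density_q by (simp add: ennreal_leI)
  qed
qed

lemma loss_density_alpha_le:
  assumes "0 < v1" "0 < v2" "i \<le> j" "optimal lab v1 v2 i j (\<lambda>_. c)"
    and "alpha < r lab v1 v2 i j" "feasible i j p" "\<forall>t\<in>{i..j}. p t \<le> alpha"
  shows "loss_density lab v1 v2 i j (\<lambda>_. alpha) eta \<le> loss_density lab v1 v2 i j p eta"
proof (cases "eta < 0 \<or> alpha \<le> eta")
  case True
  with assms(7) show ?thesis by (rule loss_density_const_le_outside)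
next
  case False
  have c_unit: "0 \<le> c" "c \<le> 1"
    using assms(3,4) unfolding optimal_def feasible_def by auto
  have "loss_density lab v1 v2 i j (\<lambda>_. alpha) eta \<le> loss_density lab v1 v2 i j (\<lambda>_. c) eta"
    using False assms(1,2,5) c_unit by (intro loss_density_const_le_const) auto
  also have "\<dots> \<le> loss_density lab v1 v2 i j p eta"
    using False assms(1,2,5) r_le_1[of v1 v2 lab i j]
    by (intro optimal_density_le[OF assms(4,6)]) auto
  finally show ?thesis .
qed

theorem lemma4p8:
  fixes lab :: "nat \<Rightarrow> label" and v1 v2 alpha :: real and T i j :: nat
  assumes "v1 > 0" and "v2 > 0" and "1 \<le> i" and "i \<le> j" and "j \<le> T"
    and "\<exists>c. optimal lab v1 v2 i j (\<lambda>_. c)"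
    and "0 \<le> alpha" and "alpha < r lab v1 v2 i j"
  shows "\<forall>rho. rbpsr rho \<longrightarrow>
           (\<forall>p. feasible i j p \<and> (\<forall>t\<in>{i..j}. p t \<le> alpha) \<longrightarrow>
              J lab v1 v2 rho i j (\<lambda>_. alpha) \<le> J lab v1 v2 rho i j p)"
proof (intro allI impI)
  fix rho p
  assume rho: "rbpsr rho" and p: "feasible i j p \<and> (\<forall>t\<in>{i..j}. p t \<le> alpha)"
  obtain c where c: "optimal lab v1 v2 i j (\<lambda>_. c)" using assms(6) by blast
  have sets_rho: "sets rho = sets borel" using rho unfolding rbpsr_def by blast
  show "J lab v1 v2 rho i j (\<lambda>_. alpha) \<le> J lab v1 v2 rho i j p"
    unfolding J_as_integral[OF sets_rho]
    using loss_density_alpha_le[OF assms(1,2,4) c assms(8)] p by (intro nn_integral_mono) auto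
qed

end
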